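(* Let $\alpha,\tau\in C^{\log}_{\mathrm{loc}}$ with $\tau^-\ge0$, let $p,q\in\mathcal{P}^{\log}_0$ with $0<q^+<\infty$. There exists $c>0$ such that for all $\lambda\in\mathfrak{b}^{\alpha(\cdot),\tau(\cdot)}_{p(\cdot),q(\cdot)}$, all $v\in\mathbb{N}_0$, $m\in\mathbb{Z}^n$ and $x\in Q_{v,m}$, $$|\lambda_{v,m}|\le c\,2^{-v(\alpha(x)+\frac n2)}|Q_{v,m}|^{\tau(x)}\,\|\lambda\|_{\mathfrak{b}^{\alpha(\cdot),\tau(\cdot)}_{p(\cdot),q(\cdot)}}\,\|\chi_{v,m}\|_{p(\cdot)}^{-1}.$$
   Context: $g^\pm$: essential sup/inf. $\mathcal{P}_0$: measurable $p:\mathbb{R}^n\to(0,\infty)$ with $p^->0$. $g\in C^{\log}_{\mathrm{loc}}$: $|g(x)-g(y)|\le c/\log(e+1/|x-y|)$; $g\in C^{\log}$: additionally $|g(x)-g_\infty|\le c/\log(e+|x|)$. $\mathcal{P}_0^{\log}=\{p\in\mathcal{P}_0:1/p\in C^{\log}\}$. $\|f\|_{p(\cdot)}=\inf\{\lambda>0:\int|f/\lambda|^{p(x)}dx\le1\}$; $\|(f_v)\|_{\ell^{q(\cdot)}(L^{p(\cdot)})}=\inf\{\mu>0:\sum_v\inf\{\lambda_v>0:\int|f_v(x)/(\mu\lambda_v^{1/q(x)})|^{p(x)}dx\le1\}\le1\}$. Dyadic cubes $Q_{v,m}=\{x:m_i\le2^vx_i<m_i+1\}$, $\chi_{v,m}=\chi_{Q_{v,m}}$,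 $\mathcal{Q}$ the set of dyadic cubes, $v_P=-\log_2l(P)$, $v_P^+=\max(v_P,0)$. For complex sequences $\lambda=\{\lambda_{v,m}:v\in\mathbb{N}_0,m\in\mathbb{Z}^n\}$, $\|\lambda\|_{\mathfrak{b}^{\alpha(\cdot),\tau(\cdot)}_{p(\cdot),q(\cdot)}}=\sup_{P\in\mathcal{Q}}\Big\|\Big(|P|^{-\tau(\cdot)}\chi_P\sum_{m\in\mathbb{Z}^n}2^{v(\alpha(\cdot)+n/2)}\lambda_{v,m}\chi_{v,m}\Big)_{v\ge v_P^+}\Big\|_{\ell^{q(\cdot)}(L^{p(\cdot)})}$ and $\mathfrak{b}^{\alpha(\cdot),\tau(\cdot)}_{p(\cdot),q(\cdot)}$ is the set of $\lambda$ where this is finite. *)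

theory Defs
  imports "HOL-Analysis.Analysis" "HOL-Probability.Essential_Supremum"
begin

definition ess_sup :: "(real^'n \<Rightarrow> real) \<Rightarrow> ereal" where
  "ess_sup g = esssup lebesgue (\<lambda>x. ereal (g x))"

definition ess_inf :: "(real^'n \<Rightarrow> real) \<Rightarrow> ereal" where
  "ess_inf g = - esssup lebesgue (\<lambda>x. - ereal (g x))"

definition C_log_loc :: "(real^'n \<Rightarrow> real) \<Rightarrow> bool" where
  "C_log_loc g \<longleftrightarrow> (\<exists>c. \<forall>x y. x \<noteq> y \<longrightarrow>
      \<bar>g x - g y\<bar> \<le> c / ln (exp 1 + 1 / norm (x - y)))"

definition C_log :: "(real^'n \<Rightarrow> real) \<Rightarrow> bool" where
  "C_log g \<longleftrightarrow> C_log_loc g \<and> (\<exists>c g_inf. \<forall>x.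
      \<bar>g x - g_inf\<bar> \<le> c / ln (exp 1 + norm x))"

definition P0 :: "(real^'n \<Rightarrow> real) \<Rightarrow> bool" where
  "P0 p \<longleftrightarrow> p \<in> borel_measurable lebesgue \<and> (\<forall>x. 0 < p x) \<and> ess_inf p > 0"

definition P0_log :: "(real^'n \<Rightarrow> real) \<Rightarrow> bool" where
  "P0_log p \<longleftrightarrow> P0 p \<and> C_log (\<lambda>x. 1 / p x)"

definition dcube :: "int \<Rightarrow> int^'n \<Rightarrow> (real^'n) set" where
  "dcube k m = {x. \<forall>i. real_of_int (m$i) \<le> 2 powr k * x$i \<and> 2 powr k * x$i < real_of_int (m$i) + 1}"

text \<open>Variable exponent Lebesgue (quasi-)norm; value \<infinity> if no admissible lambda exists.\<close>
definition Lp_var_norm :: "(real^'n \<Rightarrow> real) \<Rightarrow> (real^'n \<Rightarrow> 'b::real_normed_vector) \<Rightarrow> ennreal" where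
  "Lp_var_norm p f = Inf {ennreal l | l. 0 < l \<and>
      (\<integral>\<^sup>+ x. ennreal ((norm (f x) / l) powr p x) \<partial>lebesgue) \<le> 1}"

definition lq_Lp_norm :: "(real^'n \<Rightarrow> real) \<Rightarrow> (real^'n \<Rightarrow> real) \<Rightarrow> (nat \<Rightarrow> real^'n \<Rightarrow> 'b::real_normed_vector) \<Rightarrow> ennreal" where
  "lq_Lp_norm p q f = Inf {ennreal \<mu> | \<mu>. 0 < \<mu> \<and>
      (\<Sum>v. Inf {ennreal l | l. 0 < l \<and>
          (\<integral>\<^sup>+ x. ennreal ((norm (f v x) / (\<mu> * l powr (1 / q x))) powr p x) \<partial>lebesgue) \<le> 1}) \<le> 1}"

text \<open>The supremum ranges over all
  dyadic cubes P = Q_{k,m} (k \<in> Z, so v_P = k); the sequence is indexed by v \<ge> v_P^+ = nat k,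
  the terms with v < v_P^+ being set to 0 (they contribute nothing to the mixed norm).\<close>
definition b_norm :: "(real^'n \<Rightarrow> real) \<Rightarrow> (real^'n \<Rightarrow> real) \<Rightarrow> (real^'n \<Rightarrow> real) \<Rightarrow> (real^'n \<Rightarrow> real)
      \<Rightarrow> (nat \<Rightarrow> int^'n \<Rightarrow> complex) \<Rightarrow> ennreal" where
  "b_norm \<alpha> \<tau> p q lam = (SUP (k, mP) \<in> (UNIV :: (int \<times> (int^'n)) set).
      lq_Lp_norm p q (\<lambda>v x. if nat k \<le> v then
         complex_of_real (measure lebesgue (dcube k mP) powr (- \<tau> x) * indicator (dcube k mP) x) *
         (\<Sum>\<^sub>\<infinity> m. complex_of_real (2 powr (real v * (\<alpha> x + real CARD('n) / 2)) *
                indicator (dcube (int v) m) x) * lam v m)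
       else 0))"

definition b_space :: "(real^'n \<Rightarrow> real) \<Rightarrow> (real^'n \<Rightarrow> real) \<Rightarrow> (real^'n \<Rightarrow> real) \<Rightarrow> (real^'n \<Rightarrow> real)
      \<Rightarrow> (nat \<Rightarrow> int^'n \<Rightarrow> complex) set" where
  "b_space \<alpha> \<tau> p q = {lam. b_norm \<alpha> \<tau> p q lam < \<infinity>}"

end

theory Submission
  imports Defs
begin

text \<open>
  Fix v, m and take the cube P = Q_{v,m} in the supremum defining the b-norm. On P the v-th term
  of the localized sequence has modulus w(y) |lam_{v,m}| with w(y) = |P|^{-tau(y)} 2^{v(alpha(y)+n/2)}.
  Since diam P ~ 2^{-v}, local log-Hoelder continuity bounds v |g(x) - g(y)| on P uniformly for
  g = alpha, tau, so w(y) >= w(x) / C. Hence that term dominates |lam_{v,m}| w(x) chi_P / C, and the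
  mixed norm dominates 2^{-1/q^-} times the L^{p(.)} norm of any single term. Dividing by
  ||chi_P||_{p(.)}, which is positive because p^- > 0, gives the estimate.
\<close>

lemma dcube_index_unique:
  assumes "y \<in> dcube k m" "y \<in> dcube k m'"
  shows "m = m'"
proof -
  have "m $ i = m' $ i" for i
    using assms unfolding dcube_def
    by (metis (mono_tags, lifting) floor_unique mem_Collect_eq)
  then show ?thesis
    by (simp add: vec_eq_iff)
qed

lemma dcube_dist_le:
  fixes x y :: "real^'n"
  assumes "x \<in> dcube k m" "y \<in> dcube k m"
  shows "dist x y \<le> real CARD('n) * 2 powr (- real_of_int k)"
proof -
  have "\<bar>x $ i - y $ i\<bar> \<le> 2 powr (- real_of_int k)" for i
  proof -
    have "m $ i \<le> 2 powr k * x $ i" "2 powr k * x $ i < m $ i + 1"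
      "m $ i \<le> 2 powr k * y $ i" "2 powr k * y $ i < m $ i + 1"
      using assms unfolding dcube_def by auto
    then have "\<bar>2 powr k * x $ i - 2 powr k * y $ i\<bar> \<le> 1"
      by (simp add: abs_le_iff)
    then have "2 powr k * \<bar>x $ i - y $ i\<bar> \<le> 1"
      by (simp add: abs_mult right_diff_distrib[symmetric])
    then show ?thesis
      by (simp add: powr_minus field_simps)
  qed
  then have "(\<Sum>i\<in>UNIV. \<bar>(x - y) $ i\<bar>) \<le> (\<Sum>i\<in>(UNIV::'n set). 2 powr (- real_of_int k))"
    by (intro sum_mono) simp
  then show ?thesis
    using norm_le_l1_cart[of "x - y"] by (simp add: dist_norm)
qed

lemma dcube_sets_lebesgue [measurable]: "dcube k m \<in> sets lebesgue"
proof -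
  have "dcube k m \<in> sets borel"
    unfolding dcube_def by measurable
  then show ?thesis
    by simp
qed

lemma measure_dcube:
  "measure lebesgue (dcube k (m::int^'n)) = 2 powr (- real_of_int k * CARD('n))"
proof -
  define a :: "real^'n" where "a = (\<chi> i. m$i / 2 powr k)"
  define b :: "real^'n" where "b = (\<chi> i. (m$i + 1) / 2 powr k)"
  have ab: "\<forall>i\<in>Basis. a \<bullet> i \<le> b \<bullet> i"
    by (auto simp: a_def b_def Basis_vec_def cart_eq_inner_axis[symmetric] divide_right_mono)
  have sub: "box a b \<subseteq> dcube k m" "dcube k m \<subseteq> cbox a b"
    unfolding dcube_def a_def b_def by (auto simp: mem_box_cart field_simps less_imp_le)
  then have "measure lebesgue (box a b) \<le> measure lebesgue (dcube k m)"
    by (intro measure_mono_fmeasurable) (auto intro: fmeasurableI2[OF lmeasurable_cbox])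
  moreover have "measure lebesgue (dcube k m) \<le> measure lebesgue (cbox a b)"
    using sub by (intro measure_mono_fmeasurable) auto
  moreover have "measure lebesgue (box a b) = measure lebesgue (cbox a b)"
    using ab by (simp add: measure_lborel_box_eq measure_lborel_cbox_eq)
  moreover have "measure lebesgue (cbox a b) = (\<Prod>i\<in>UNIV. b$i - a$i)"
  proof -
    have "cbox a b \<noteq> {}"
      using ab by (simp add: box_ne_empty)
    then show ?thesis
      by (simp flip: content_cbox_cart)
  qed
  moreover have "(\<Prod>i\<in>UNIV. b$i - a$i) = (\<Prod>i\<in>(UNIV::'n set). 2 powr (- real_of_int k))"
    by (intro prod.cong) (auto simp: a_def b_def powr_minus field_simps)
  ultimately show ?thesis
    by (simp add: powr_realpow[symmetric] powr_powr mult.commute)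
qed

lemma mult_ln2_le_ln_exp1_plus_inverse:
  fixes d t N :: real
  assumes "0 < d" "d \<le> N * 2 powr (- t)" "1 \<le> N"
  shows "t * ln 2 \<le> (1 + ln N) * ln (exp 1 + 1 / d)"
proof -
  define L where "L = ln (exp 1 + 1 / d)"
  have "1 \<le> L"
    unfolding L_def using assms(1) by (subst ln_ge_iff) (auto intro: add_pos_nonneg)
  have "2 powr t / N \<le> 1 / d"
    using assms by (simp add: powr_minus field_simps)
  also have "\<dots> < exp 1 + 1 / d"
    by simp
  finally have "ln (2 powr t / N) \<le> L"
    unfolding L_def using assms by (subst ln_le_cancel_iff) (auto intro!: add_pos_nonneg)
  then have "t * ln 2 \<le> L + ln N"
    using assms(3) by (simp add: ln_div)
  also have "\<dots> \<le> (1 + ln N) * L"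
    using \<open>1 \<le> L\<close> assms(3) by (simp add: distrib_right mult_le_cancel_left1)
  finally show ?thesis
    unfolding L_def .
qed

lemma C_log_loc_dcube_oscillation:
  fixes g :: "real^'n \<Rightarrow> real"
  assumes "C_log_loc g"
  obtains c where "\<And>v m x y. x \<in> dcube (int v) m \<Longrightarrow> y \<in> dcube (int v) m \<Longrightarrow> real v * \<bar>g x - g y\<bar> \<le> c"
proof -
  obtain c where c: "\<And>x y. x \<noteq> y \<Longrightarrow> \<bar>g x - g y\<bar> \<le> c / ln (exp 1 + 1 / norm (x - y))"
    using assms unfolding C_log_loc_def by blast
  define K where "K = (1 + ln (real CARD('n))) / ln 2"
  have "real v * \<bar>g x - g y\<bar> \<le> max c 0 * K"
    if xy: "x \<in> dcube (int v) m" "y \<in> dcube (int v) m" for v m and x y :: "real^'n"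
  proof (cases "x = y")
    case False
    define L where "L = ln (exp 1 + 1 / norm (x - y))"
    have "0 < L"
      unfolding L_def by (intro ln_gt_zero) (smt (verit) one_less_exp_iff zero_le_divide_1_iff norm_ge_zero)
    have "real v * ln 2 \<le> (1 + ln (real CARD('n))) * L"
      unfolding L_def using False dcube_dist_le[OF xy]
      by (intro mult_ln2_le_ln_exp1_plus_inverse) (auto simp: dist_norm)
    then have "real v \<le> K * L"
      unfolding K_def by (simp add: field_simps)
    moreover have "\<bar>g x - g y\<bar> \<le> max c 0 / L"
      using c[OF False] \<open>0 < L\<close> unfolding L_def[symmetric] by (smt (verit) divide_right_mono)
    ultimately have "real v * \<bar>g x - g y\<bar> \<le> K * L * (max c 0 / L)"
      by (intro mult_mono) auto
    then show ?thesis
      using \<open>0 < L\<close> by (simp add: field_simps)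
  qed (simp add: K_def)
  then show ?thesis
    using that by blast
qed

lemma ess_inf_pos_imp_AE_ge:
  fixes g :: "real^'n \<Rightarrow> real"
  assumes "ess_inf g > 0"
  obtains r where "0 < r" "AE x in lebesgue. r \<le> g x"
proof -
  have "AE x in lebesgue. - ereal (g x) \<le> esssup lebesgue (\<lambda>x. - ereal (g x))"
    by (rule esssup_AE)
  then have ae: "AE x in lebesgue. ess_inf g \<le> ereal (g x)"
    unfolding ess_inf_def by eventually_elim (simp add: ereal_uminus_le_reorder)
  obtain r where r: "0 < ereal r" "ereal r < ess_inf g"
    using ereal_dense2[OF assms] by blast
  from ae have "AE x in lebesgue. r \<le> g x"
    by eventually_elim (use r(2) in \<open>metis ereal_less_eq(3) less_imp_le order.trans\<close>)
  with r(1) show ?thesis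
    using that by simp
qed

lemma Lp_var_norm_le:
  assumes "0 < l" "(\<integral>\<^sup>+ x. ennreal ((norm (f x) / l) powr p x) \<partial>lebesgue) \<le> 1"
  shows "Lp_var_norm p f \<le> ennreal l"
  unfolding Lp_var_norm_def using assms by (intro Inf_lower) blast

lemma Lp_var_norm_scaled_mono:
  assumes "0 \<le> a" "\<And>x. 0 \<le> p x" "\<And>x. a * norm (g x) \<le> norm (f x)"
  shows "ennreal a * Lp_var_norm p g \<le> Lp_var_norm p f"
proof (cases "a = 0")
  case False
  with assms(1) have "0 < a"
    by simp
  show ?thesis
    unfolding Lp_var_norm_def[of p f]
  proof (rule Inf_greatest, clarify)
    fix l :: real
    assume l: "0 < l" and modular: "(\<integral>\<^sup>+ x. ennreal ((norm (f x) / l) powr p x) \<partial>lebesgue) \<le> 1"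
    have "(\<integral>\<^sup>+ x. ennreal ((norm (g x) / (l / a)) powr p x) \<partial>lebesgue)
        \<le> (\<integral>\<^sup>+ x. ennreal ((norm (f x) / l) powr p x) \<partial>lebesgue)"
      using \<open>0 < a\<close> l assms(2,3)
      by (intro nn_integral_mono ennreal_leI powr_mono2) (auto simp: divide_right_mono mult.commute)
    then have "Lp_var_norm p g \<le> ennreal (l / a)"
      using modular \<open>0 < a\<close> l by (intro Lp_var_norm_le) auto
    then have "ennreal a * Lp_var_norm p g \<le> ennreal a * ennreal (l / a)"
      by (rule mult_left_mono) simp
    also have "ennreal a * ennreal (l / a) = ennreal l"
      using \<open>0 < a\<close> by (simp flip: ennreal_mult')
    finally show "ennreal a * Lp_var_norm p g \<le> ennreal l" .
  qed
qed simp

lemma Lp_var_norm_indicator_ge: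
  assumes "0 < r" "AE x in lebesgue. r \<le> p x"
    and "P \<in> sets lebesgue" "0 < measure lebesgue P"
  shows "ennreal (min 1 (measure lebesgue P powr (1 / r))) \<le> Lp_var_norm p (indicator P :: _ \<Rightarrow> real)"
  unfolding Lp_var_norm_def
proof (rule Inf_greatest, clarify, rule ccontr)
  fix l :: real
  assume l: "0 < l"
    and modular: "(\<integral>\<^sup>+ x. ennreal ((norm (indicator P x :: real) / l) powr p x) \<partial>lebesgue) \<le> 1"
    and "\<not> ennreal (min 1 (measure lebesgue P powr (1 / r))) \<le> ennreal l"
  then have "l < 1" "l < measure lebesgue P powr (1 / r)"
    by (auto simp: not_le ennreal_less_iff)
  then have "l powr r < measure lebesgue P"
    using l assms(1,4) powr_less_mono2[of r l "measure lebesgue P powr (1 / r)"]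
    by (simp add: powr_powr)
  then have "(1::ennreal) < ennreal ((1 / l) powr r * measure lebesgue P)"
    using l by (simp add: powr_divide field_simps)
  also have "\<dots> = ennreal ((1 / l) powr r) * emeasure lebesgue P"
  proof -
    have "emeasure lebesgue P \<noteq> top"
      using assms(4) measure_zero_top by force
    then show ?thesis
      by (simp add: emeasure_eq_ennreal_measure ennreal_mult')
  qed
  also have "\<dots> = (\<integral>\<^sup>+ x. ennreal ((1 / l) powr r) * indicator P x \<partial>lebesgue)"
    using assms(3) by (rule nn_integral_cmult_indicator[symmetric])
  also have "\<dots> \<le> (\<integral>\<^sup>+ x. ennreal ((norm (indicator P x :: real) / l) powr p x) \<partial>lebesgue)"
    using assms(2)
  proof (intro nn_integral_mono_AE, eventually_elim)
    case (elim x)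
    have "(1 / l) powr r \<le> (1 / l) powr p x"
      using elim l \<open>l < 1\<close> by (intro powr_mono) auto
    then show ?case
      by (simp add: indicator_def ennreal_leI)
  qed
  finally show False
    using modular by simp
qed

lemma Lp_var_norm_le_lq_Lp_norm:
  assumes "0 < r" "AE x in lebesgue. r \<le> q x" "\<And>x. 0 \<le> p x"
  shows "ennreal (2 powr (- 1 / r)) * Lp_var_norm p (F v) \<le> lq_Lp_norm p q F"
  unfolding lq_Lp_norm_def
proof (rule Inf_greatest, clarify)
  fix \<mu> :: real
  assume "0 < \<mu>" and sum_le: "(\<Sum>w. Inf {ennreal l | l. 0 < l \<and>
      (\<integral>\<^sup>+ x. ennreal ((norm (F w x) / (\<mu> * l powr (1 / q x))) powr p x) \<partial>lebesgue) \<le> 1}) \<le> 1"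
  \<comment> \<open>The v-th summand is below 2, so some level l < 2 is admissible, and l^{1/q} <= 2^{1/r} absorbs q.\<close>
  have "Inf {ennreal l | l. 0 < l \<and>
      (\<integral>\<^sup>+ x. ennreal ((norm (F v x) / (\<mu> * l powr (1 / q x))) powr p x) \<partial>lebesgue) \<le> 1} < 2"
    by (rule ennreal_suminf_lessD) (use sum_le in \<open>simp add: order_le_less_trans\<close>)
  then obtain l where l: "0 < l" "ennreal l < 2"
    and modular: "(\<integral>\<^sup>+ x. ennreal ((norm (F v x) / (\<mu> * l powr (1 / q x))) powr p x) \<partial>lebesgue) \<le> 1"
    unfolding Inf_less_iff by blast
  have "l < 2"
    using l(2) by simp
  have "(\<integral>\<^sup>+ x. ennreal ((norm (F v x) / (\<mu> * 2 powr (1 / r))) powr p x) \<partial>lebesgue)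
      \<le> (\<integral>\<^sup>+ x. ennreal ((norm (F v x) / (\<mu> * l powr (1 / q x))) powr p x) \<partial>lebesgue)"
    using assms(2)
  proof (intro nn_integral_mono_AE, eventually_elim)
    case (elim x)
    have "l powr (1 / q x) \<le> 2 powr (1 / q x)"
      using l(1) \<open>l < 2\<close> elim assms(1) by (intro powr_mono2) auto
    also have "\<dots> \<le> 2 powr (1 / r)"
      using elim assms(1) by (intro powr_mono) (auto simp: divide_simps)
    finally have "\<mu> * l powr (1 / q x) \<le> \<mu> * 2 powr (1 / r)"
      using \<open>0 < \<mu>\<close> by (intro mult_left_mono) auto
    then have "norm (F v x) / (\<mu> * 2 powr (1 / r)) \<le> norm (F v x) / (\<mu> * l powr (1 / q x))"
      using \<open>0 < \<mu>\<close> l(1) by (intro divide_left_mono) auto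
    then show ?case
      using assms(3) \<open>0 < \<mu>\<close> by (intro ennreal_leI powr_mono2) auto
  qed
  then have "Lp_var_norm p (F v) \<le> ennreal (\<mu> * 2 powr (1 / r))"
    using modular \<open>0 < \<mu>\<close> by (intro Lp_var_norm_le) auto
  then have "ennreal (2 powr (- 1 / r)) * Lp_var_norm p (F v)
      \<le> ennreal (2 powr (- 1 / r)) * ennreal (\<mu> * 2 powr (1 / r))"
    by (rule mult_left_mono) simp
  also have "\<dots> = ennreal (2 powr (- 1 / r) * 2 powr (1 / r) * \<mu>)"
    using \<open>0 < \<mu>\<close> by (simp add: ennreal_mult mult_ac)
  also have "\<dots> = ennreal \<mu>"
    by (simp flip: powr_add)
  finally show "ennreal (2 powr (- 1 / r)) * Lp_var_norm p (F v) \<le> ennreal \<mu>" .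
qed

text \<open>For N = \<infinity> the right-hand side is 0 (as enn2real \<infinity> = 0); the hypothesis then forces a = 0.\<close>

lemma ennreal_mult_le_imp_le_divide:
  assumes "ennreal a * N \<le> ennreal b" "0 \<le> a" "0 \<le> b" "0 < N"
  shows "a \<le> b / enn2real N"
proof (cases N)
  case (real n)
  with assms have "a * n \<le> b" "0 < n"
    by (simp_all add: ennreal_mult'[symmetric])
  then show ?thesis
    using real by (simp add: field_simps)
next
  case top
  with assms show ?thesis
    by (cases "a = 0") (auto simp: ennreal_mult_top top_unique)
qed

definition b_local_seq :: "(real^'n \<Rightarrow> real) \<Rightarrow> (real^'n \<Rightarrow> real) \<Rightarrow> (nat \<Rightarrow> int^'n \<Rightarrow> complex)
      \<Rightarrow> int \<Rightarrow> int^'n \<Rightarrow> nat \<Rightarrow> real^'n \<Rightarrow> complex" where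
  "b_local_seq \<alpha> \<tau> lam k mP = (\<lambda>v x. if nat k \<le> v then
      complex_of_real (measure lebesgue (dcube k mP) powr (- \<tau> x) * indicator (dcube k mP) x) *
      (\<Sum>\<^sub>\<infinity> m. complex_of_real (2 powr (real v * (\<alpha> x + real CARD('n) / 2)) *
             indicator (dcube (int v) m) x) * lam v m)
    else 0)"

lemma lq_Lp_norm_b_local_seq_le_b_norm:
  "lq_Lp_norm p q (b_local_seq \<alpha> \<tau> lam k mP) \<le> b_norm \<alpha> \<tau> p q lam"
  unfolding b_norm_def b_local_seq_def by (rule SUP_upper2[where i="(k, mP)"]) auto

definition b_weight :: "(real^'n \<Rightarrow> real) \<Rightarrow> (real^'n \<Rightarrow> real) \<Rightarrow> nat \<Rightarrow> real^'n \<Rightarrow> real" where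
  "b_weight \<alpha> \<tau> v x = 2 powr (real v * (\<alpha> x + real CARD('n) * (\<tau> x + 1 / 2)))"

lemma b_weight_pos: "0 < b_weight \<alpha> \<tau> v x"
  by (simp add: b_weight_def)

lemma b_weight_eq_dcube:
  fixes \<alpha> \<tau> :: "real^'n \<Rightarrow> real" and m :: "int^'n"
  shows "b_weight \<alpha> \<tau> v x
    = measure lebesgue (dcube (int v) m) powr (- \<tau> x) * 2 powr (real v * (\<alpha> x + real CARD('n) / 2))"
proof -
  have "measure lebesgue (dcube (int v) m) powr (- \<tau> x) = 2 powr (real v * real CARD('n) * \<tau> x)"
    by (simp add: measure_dcube powr_powr)
  then show ?thesis
    unfolding b_weight_def by (simp add: powr_add[symmetric] algebra_simps)
qed

lemma norm_b_local_seq_diagonal: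
  fixes \<alpha> \<tau> :: "real^'n \<Rightarrow> real"
  assumes "x \<in> dcube (int v) m"
  shows "norm (b_local_seq \<alpha> \<tau> lam (int v) m v x) = b_weight \<alpha> \<tau> v x * cmod (lam v m)"
proof -
  have "(\<Sum>\<^sub>\<infinity> m'. complex_of_real (2 powr (real v * (\<alpha> x + real CARD('n) / 2)) *
          indicator (dcube (int v) m') x) * lam v m')
      = (\<Sum>\<^sub>\<infinity> m'\<in>{m}. complex_of_real (2 powr (real v * (\<alpha> x + real CARD('n) / 2)) *
          indicator (dcube (int v) m') x) * lam v m')"
  proof (rule infsum_cong_neutral)
    fix m' assume "m' \<in> UNIV - {m}"
    then have "x \<notin> dcube (int v) m'"
      using assms dcube_index_unique by blast
    then show "complex_of_real (2 powr (real v * (\<alpha> x + real CARD('n) / 2)) *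
        indicator (dcube (int v) m') x) * lam v m' = 0"
      by simp
  qed auto
  also have "\<dots> = complex_of_real (2 powr (real v * (\<alpha> x + real CARD('n) / 2))) * lam v m"
    using assms by simp
  finally show ?thesis
    using assms unfolding b_local_seq_def b_weight_eq_dcube[where m=m]
    by (simp add: norm_mult)
qed

lemma b_weight_dcube_comparable:
  fixes \<alpha> \<tau> :: "real^'n \<Rightarrow> real"
  assumes "C_log_loc \<alpha>" "C_log_loc \<tau>"
  obtains C where "0 < C"
    "\<And>v m x y. x \<in> dcube (int v) m \<Longrightarrow> y \<in> dcube (int v) m \<Longrightarrow> b_weight \<alpha> \<tau> v x \<le> C * b_weight \<alpha> \<tau> v y"
proof -
  obtain Ca where Ca: "\<And>v m x y. x \<in> dcube (int v) m \<Longrightarrow> y \<in> dcube (int v) m \<Longrightarrow> real v * \<bar>\<alpha> x - \<alpha> y\<bar> \<le> Ca"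
    using C_log_loc_dcube_oscillation[OF assms(1)] by blast
  obtain Ct where Ct: "\<And>v m x y. x \<in> dcube (int v) m \<Longrightarrow> y \<in> dcube (int v) m \<Longrightarrow> real v * \<bar>\<tau> x - \<tau> y\<bar> \<le> Ct"
    using C_log_loc_dcube_oscillation[OF assms(2)] by blast
  have comparable: "b_weight \<alpha> \<tau> v x \<le> 2 powr (Ca + real CARD('n) * Ct) * b_weight \<alpha> \<tau> v y"
    if "x \<in> dcube (int v) m" "y \<in> dcube (int v) m" for v m and x y :: "real^'n"
  proof -
    have "real v * (\<alpha> x - \<alpha> y) \<le> Ca" "real v * (\<tau> x - \<tau> y) \<le> Ct"
      using Ca[OF that] Ct[OF that] by (smt (verit) abs_ge_self mult_left_mono of_nat_0_le_iff)+
    then have "real v * (\<alpha> x - \<alpha> y) + real CARD('n) * (real v * (\<tau> x - \<tau> y)) \<le> Ca + real CARD('n) * Ct"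
      by (intro add_mono mult_left_mono) auto
    then show ?thesis
      unfolding b_weight_def by (simp add: powr_add[symmetric] algebra_simps)
  qed
  show ?thesis
    using that[OF _ comparable] by simp
qed

lemma inverse_b_weight:
  fixes \<alpha> \<tau> :: "real^'n \<Rightarrow> real" and m :: "int^'n"
  shows "inverse (b_weight \<alpha> \<tau> v x)
    = 2 powr (- real v * (\<alpha> x + real CARD('n) / 2)) * measure lebesgue (dcube (int v) m) powr \<tau> x"
  unfolding b_weight_eq_dcube[where m=m] by (simp add: powr_minus mult_ac)

lemma Lp_var_norm_indicator_dcube_pos:
  assumes "0 < r" "AE x in lebesgue. r \<le> p x"
  shows "0 < Lp_var_norm p (indicator (dcube k m) :: real^'n \<Rightarrow> real)"
proof -
  have "0 < measure lebesgue (dcube k m)"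
    by (simp add: measure_dcube)
  then have "ennreal (min 1 (measure lebesgue (dcube k m) powr (1 / r)))
      \<le> Lp_var_norm p (indicator (dcube k m) :: real^'n \<Rightarrow> real)"
    using assms by (intro Lp_var_norm_indicator_ge) auto
  moreover have "0 < ennreal (min 1 (measure lebesgue (dcube k m) powr (1 / r)))"
    by (simp add: measure_dcube)
  ultimately show ?thesis
    by (rule order.strict_trans2[rotated])
qed

lemma Lp_var_norm_b_local_seq_ge:
  fixes \<alpha> \<tau> p :: "real^'n \<Rightarrow> real"
  assumes "0 < C" "\<And>y. y \<in> dcube (int v) m \<Longrightarrow> b_weight \<alpha> \<tau> v x \<le> C * b_weight \<alpha> \<tau> v y"
    and "\<And>y. 0 \<le> p y"
  shows "ennreal (cmod (lam v m) * b_weight \<alpha> \<tau> v x / C) * Lp_var_norm p (indicator (dcube (int v) m) :: real^'n \<Rightarrow> real)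
    \<le> Lp_var_norm p (b_local_seq \<alpha> \<tau> lam (int v) m v)"
proof (rule Lp_var_norm_scaled_mono)
  fix y
  show "cmod (lam v m) * b_weight \<alpha> \<tau> v x / C * norm (indicator (dcube (int v) m) y :: real)
    \<le> norm (b_local_seq \<alpha> \<tau> lam (int v) m v y)"
  proof (cases "y \<in> dcube (int v) m")
    case True
    have "cmod (lam v m) * b_weight \<alpha> \<tau> v x \<le> cmod (lam v m) * (C * b_weight \<alpha> \<tau> v y)"
      using assms(2)[OF True] by (rule mult_left_mono) simp
    then show ?thesis
      unfolding norm_b_local_seq_diagonal[OF True] using True assms(1) by (simp add: field_simps)
  qed simp
qed (use assms b_weight_pos[of \<alpha> \<tau> v x] in auto)

lemma b_space_coefficient_bound:
  fixes \<alpha> \<tau> p q :: "real^'n \<Rightarrow> real"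
  assumes lam: "lam \<in> b_space \<alpha> \<tau> p q"
    and C: "0 < C" "\<And>y. y \<in> dcube (int v) m \<Longrightarrow> b_weight \<alpha> \<tau> v x \<le> C * b_weight \<alpha> \<tau> v y"
    and p: "0 < rp" "AE y in lebesgue. rp \<le> p y" "\<And>y. 0 \<le> p y"
    and q: "0 < rq" "AE y in lebesgue. rq \<le> q y"
  shows "cmod (lam v m) \<le> 2 powr (1 / rq) * C * 2 powr (- real v * (\<alpha> x + real CARD('n) / 2))
    * measure lebesgue (dcube (int v) m) powr (\<tau> x) * enn2real (b_norm \<alpha> \<tau> p q lam)
    / enn2real (Lp_var_norm p (indicator (dcube (int v) m) :: real^'n \<Rightarrow> real))"
proof -
  define a where "a = 2 powr (- 1 / rq) * (cmod (lam v m) * b_weight \<alpha> \<tau> v x / C)"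
  define N where "N = Lp_var_norm p (indicator (dcube (int v) m) :: real^'n \<Rightarrow> real)"
  define B where "B = enn2real (b_norm \<alpha> \<tau> p q lam)"
  have "0 \<le> a"
    unfolding a_def using C(1) b_weight_pos[of \<alpha> \<tau> v x] by simp
  have "ennreal a * N = ennreal (2 powr (- 1 / rq)) * (ennreal (cmod (lam v m) * b_weight \<alpha> \<tau> v x / C) * N)"
    unfolding a_def by (subst ennreal_mult') (simp_all only: mult.assoc powr_ge_zero)
  also have "\<dots> \<le> ennreal (2 powr (- 1 / rq)) * Lp_var_norm p (b_local_seq \<alpha> \<tau> lam (int v) m v)"
    unfolding N_def using C p(3) by (intro mult_left_mono Lp_var_norm_b_local_seq_ge) auto
  also have "\<dots> \<le> lq_Lp_norm p q (b_local_seq \<alpha> \<tau> lam (int v) m)"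
    by (rule Lp_var_norm_le_lq_Lp_norm[OF q p(3)])
  also have "\<dots> \<le> b_norm \<alpha> \<tau> p q lam"
    by (rule lq_Lp_norm_b_local_seq_le_b_norm)
  also have "\<dots> = ennreal B"
    using lam unfolding b_space_def B_def by simp
  finally have "a \<le> B / enn2real N"
    using \<open>0 \<le> a\<close> Lp_var_norm_indicator_dcube_pos[OF p(1,2)] unfolding N_def B_def
    by (intro ennreal_mult_le_imp_le_divide) auto
  then have "cmod (lam v m) * b_weight \<alpha> \<tau> v x \<le> 2 powr (1 / rq) * C * (B / enn2real N)"
    using C(1) unfolding a_def by (simp add: powr_minus_divide field_simps)
  then have "cmod (lam v m) \<le> 2 powr (1 / rq) * C * (B / enn2real N) / b_weight \<alpha> \<tau> v x"
    by (simp only: pos_le_divide_eq[OF b_weight_pos])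
  also have "\<dots> = 2 powr (1 / rq) * C * inverse (b_weight \<alpha> \<tau> v x) * (B / enn2real N)"
    by (simp add: divide_inverse mult_ac)
  finally show ?thesis
    unfolding inverse_b_weight[where m=m] N_def B_def by (simp only: mult.assoc times_divide_eq_right)
qed

theorem lemma3p9:
  fixes \<alpha> \<tau> p q :: "real^'n \<Rightarrow> real"
  assumes "C_log_loc \<alpha>" and "C_log_loc \<tau>" and "ess_inf \<tau> \<ge> 0"
    and "P0_log p" and "P0_log q"
    and "0 < ess_sup q" and "ess_sup q < \<infinity>"
  shows "\<exists>c>0. \<forall>lam \<in> b_space \<alpha> \<tau> p q. \<forall>(v::nat) (m::int^'n) x. x \<in> dcube (int v) m \<longrightarrow>
           cmod (lam v m) \<le> c * 2 powr (- real v * (\<alpha> x + real CARD('n) / 2))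
             * measure lebesgue (dcube (int v) m) powr (\<tau> x)
             * enn2real (b_norm \<alpha> \<tau> p q lam)
             / enn2real (Lp_var_norm p (indicator (dcube (int v) m) :: real^'n \<Rightarrow> real))"
proof -
  obtain C where "0 < C" and C: "\<And>v m x y. x \<in> dcube (int v) m \<Longrightarrow> y \<in> dcube (int v) m
      \<Longrightarrow> b_weight \<alpha> \<tau> v x \<le> C * b_weight \<alpha> \<tau> v y"
    using b_weight_dcube_comparable[OF assms(1,2)] by blast
  obtain rp where rp: "0 < rp" "AE y in lebesgue. rp \<le> p y"
    using ess_inf_pos_imp_AE_ge assms(4) unfolding P0_log_def P0_def by blast
  obtain rq where rq: "0 < rq" "AE y in lebesgue. rq \<le> q y"
    using ess_inf_pos_imp_AE_ge assms(5) unfolding P0_log_def P0_def by blast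
  have p_nonneg: "\<And>y. 0 \<le> p y"
    using assms(4) unfolding P0_log_def P0_def by (simp add: less_imp_le)
  show ?thesis
    using \<open>0 < C\<close> C rp p_nonneg rq
    by (intro exI[of _ "2 powr (1 / rq) * C"] conjI ballI allI impI b_space_coefficient_bound) auto
qed

end
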